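(* Suppose $C_0$ is sufficiently large. Then for every outcome of the random choices, if $f_1,f_2,f_3,f_4\in\mathcal F$ satisfy $n_{f_1}+n_{f_2}=n_{f_3}+n_{f_4}$, then $\{f_1,f_2\}=\{f_3,f_4\}$. Consequently $S=\{n_f:f\in\mathcal F\}$ is always a Sidon set.
   Context: Generalised base notation: for a sequence $\boldsymbol b=(b_1,b_2,\dots)$ of integers $\ge 2$ and arbitrary integers $x_1,\dots,x_n$, write $[x_n\,\dots\,x_1]_{\boldsymbol b}:=x_1+x_2b_1+\dots+x_nb_1b_2\cdots b_{n-1}$. Standing data: Fix a prime $p$ and a set $A\subset\{1,\dots,\lfloor p/2\rfloor-1\}$ such that $A\cap(A+A+\{0,1\})=\emptyset$ and $A+A+A$ contains $p+2$ consecutive integers. Let $c=0.35$. Let $C_0>100p$ be a large absolute constant. Let $q\ge C_0$ be a prime power. For $d\ge1$ let $\mathcal I_d$ be the set of irreducible monic polynomials of degree $d$ in $\mathbb F_q[t]$. For $i\ge1$ let $g_i\in\mathcal I_{2i-1}$ be arbitrary and $\omega_i$ a generator of $(\mathbb F_q[t]/(g_i))^\times$. For $k\ge C_0$ let $\mathcal F_k:=\bigcup_{i:\,ck^2\le 2i<c(k+1)^2}\mathcal I_{2i}$ and $\mathcal F:=\bigcup_{k\ge C_0}\mathcal F_k$. Let $b_i=q^i-1$ for $i$ odd and $b_i=p$ for $i$ even. For $k\ge C_0$, $f\in\mathcal F_k$: $e_i(f)$ ($1\le i\le k$) is the unique integer with $0\le e_i(f)<q^{2i-1}-1$ and $\omega_i^{e_i(f)}\equiv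 f\pmod{g_i}$; $r_1(f),\dots,r_k(f)$ are uniform on $A$; $s(f)$ is uniform on $\{1,\dots,q^{3k}\}$; all these random variables (over all $f,i$) are independent. $n_f:=[s(f)\,r_k(f)\,e_k(f)\,\dots\,r_1(f)\,e_1(f)]_{\boldsymbol b}$, and $S:=\{n_f:f\in\mathcal F\}$. A Sidon set is a set of positive integers all of whose pairwise sums $s_1+s_2$ ($s_1\le s_2$) are distinct. *)

theory Defs
  imports Complex_Main "HOL-Computational_Algebra.Primes" "HOL-Algebra.Polynomial_Divisibility"
begin

text \<open>Polynomials over a (finite) field R are the HOL-Algebra coefficient lists
  (highest coefficient first) in the ring poly_ring R = F_q[t].\<close>

definition Irr :: "('a, 'b) ring_scheme \<Rightarrow> nat \<Rightarrow> 'a list set" where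
  "Irr R d = {f. f \<in> carrier (poly_ring R) \<and> pirreducible\<^bsub>R\<^esub> (carrier R) f
                  \<and> lead_coeff f = \<one>\<^bsub>R\<^esub> \<and> degree f = d}"

definition pcong :: "('a, 'b) ring_scheme \<Rightarrow> 'a list \<Rightarrow> 'a list \<Rightarrow> 'a list \<Rightarrow> bool" where
  "pcong R g a b \<longleftrightarrow> g pdivides\<^bsub>R\<^esub> (a \<ominus>\<^bsub>poly_ring R\<^esub> b)"

definition is_gen :: "('a, 'b) ring_scheme \<Rightarrow> 'a list \<Rightarrow> 'a list \<Rightarrow> bool" where
  "is_gen R g w \<longleftrightarrow> w \<in> carrier (poly_ring R) \<and> \<not> g pdivides\<^bsub>R\<^esub> w \<and>
     (\<forall>h \<in> carrier (poly_ring R). \<not> g pdivides\<^bsub>R\<^esub> h \<longrightarrow>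
        (\<exists>e::nat. pcong R g (w [^]\<^bsub>poly_ring R\<^esub> e) h))"

definition dlog :: "('a, 'b) ring_scheme \<Rightarrow> 'a list \<Rightarrow> 'a list \<Rightarrow> 'a list \<Rightarrow> nat" where
  "dlog R g w f = (THE e. e < card (carrier R) ^ degree g - 1 \<and>
                          pcong R g (w [^]\<^bsub>poly_ring R\<^esub> e) f)"

definition cc :: real where "cc = 35 / 100"

definition Fam :: "('a, 'b) ring_scheme \<Rightarrow> nat \<Rightarrow> 'a list set" where
  "Fam R k = (\<Union> {Irr R (2 * i) | i. 1 \<le> i \<and> cc * real k ^ 2 \<le> real (2 * i)
                                     \<and> real (2 * i) < cc * (real k + 1) ^ 2})"

definition FF :: "('a, 'b) ring_scheme \<Rightarrow> real \<Rightarrow> 'a list set" where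
  "FF R C0 = (\<Union> {Fam R k | k. real k \<ge> C0})"

definition kof :: "('a, 'b) ring_scheme \<Rightarrow> 'a list \<Rightarrow> nat" where
  "kof R f = (THE k. f \<in> Fam R k)"

definition genbase :: "(nat \<Rightarrow> nat) \<Rightarrow> nat list \<Rightarrow> nat" where
  "genbase b xs = (\<Sum>j<length xs. xs ! j * (\<Prod>l<j. b (Suc l)))"

definition bseq :: "nat \<Rightarrow> nat \<Rightarrow> nat \<Rightarrow> nat" where
  "bseq q p i = (if odd i then q ^ i - 1 else p)"

text \<open>n_f = [s r_k e_k ... r_1 e_1]_b where k = kof f.\<close>
definition nf :: "('a, 'b) ring_scheme \<Rightarrow> nat \<Rightarrow> (nat \<Rightarrow> 'a list) \<Rightarrow> (nat \<Rightarrow> 'a list)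
    \<Rightarrow> ('a list \<Rightarrow> nat \<Rightarrow> nat) \<Rightarrow> ('a list \<Rightarrow> nat) \<Rightarrow> 'a list \<Rightarrow> nat" where
  "nf R p g w r s f =
     (let k = kof R f in
      genbase (bseq (card (carrier R)) p)
        (map (\<lambda>j. if j = 2 * k then s f
                   else if even j then dlog R (g (j div 2 + 1)) (w (j div 2 + 1)) f
                   else r f ((j + 1) div 2))
             [0..<2 * k + 1]))"

definition sidon :: "nat set \<Rightarrow> bool" where
  "sidon S \<longleftrightarrow> (\<forall>x\<in>S. 0 < x) \<and>
     (\<forall>a\<in>S. \<forall>b\<in>S. \<forall>c\<in>S. \<forall>d\<in>S. a \<le> b \<longrightarrow> c \<le> d \<longrightarrow> a + b = c + d \<longrightarrow> a = c \<and> b = d)"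

end

(*
  Write n_f in the mixed base b: from the bottom its digits are e_1(f), r_1(f), e_2(f), r_2(f), ...,
  up to e_k(f), r_k(f) and finally s(f), where k is the level of f (f in F_k).  Since every r-digit
  is at most p/2 - 1, adding two such numbers carries at most 1 into an r-digit.  So if
  n_f1 + n_f2 = n_f3 + n_f4, comparing digits shows:
  (a) if three of the four levels reach i and the fourth is at most i - 3, then the i-th r-digits
      satisfy r = r' + r'' or r = r' + r'' + 1, which A forbids;
  (b) at a level i reached by all four, the e_i-digits give e_i(f1) + e_i(f2) = e_i(f3) + e_i(f4)
      modulo q^(2i-1) - 1, i.e. f1 f2 = f3 f4 modulo g_i, because w_i is a primitive root mod g_i.
  The moduli g_1, ..., g_m have total degree m^2, while deg (f1 f2) < 0.7 (k+1)^2; so when all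
  levels are close, f1 f2 = f3 f4 and unique factorisation gives {f1, f2} = {f3, f4}.  Otherwise (a)
  and a size comparison leave only two low levels close together and two high levels that are
  nearly equal; then (b)-type congruences at the levels reached only by the high pair give equality
  of that pair, and cancelling it gives equality of the low pair.
*)

theory Submission
  imports Defs
begin

section \<open>Monic irreducible polynomials and congruences\<close>

context field
begin

lemma pirreducible_pdivides_mult:
  assumes "g \<in> carrier (poly_ring R)" "pirreducible (carrier R) g"
    and "a \<in> carrier (poly_ring R)" "b \<in> carrier (poly_ring R)"
    and "g pdivides a \<otimes>\<^bsub>poly_ring R\<^esub> b"
  shows "g pdivides a \<or> g pdivides b"
  using pprimeE(3)[OF carrier_is_subfield assms(1) _ assms(3-5)]
    pprime_iff_pirreducible[OF carrier_is_subfield assms(1)] assms(2) by blast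

lemma pirreducible_not_Nil:
  assumes "g \<in> carrier (poly_ring R)" "pirreducible (carrier R) g"
  shows "g \<noteq> []"
  using pirreducibleE(1)[OF carrier_is_subring assms] .

lemma pcong_iff_pmod:
  assumes "a \<in> carrier (poly_ring R)" "b \<in> carrier (poly_ring R)" "g \<in> carrier (poly_ring R)"
  shows "pcong R g a b \<longleftrightarrow> a pmod g = b pmod g"
  unfolding pcong_def using same_pmod_iff_pdivides[OF carrier_is_subfield assms] by simp

lemma pcong_mult:
  assumes "a \<in> carrier (poly_ring R)" "a' \<in> carrier (poly_ring R)"
    and "b \<in> carrier (poly_ring R)" "b' \<in> carrier (poly_ring R)" "g \<in> carrier (poly_ring R)"
    and "pcong R g a a'" "pcong R g b b'"
  shows "pcong R g (a \<otimes>\<^bsub>poly_ring R\<^esub> b) (a' \<otimes>\<^bsub>poly_ring R\<^esub> b')"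
proof -
  interpret UP: cring "poly_ring R" by (rule univ_poly_is_cring[OF carrier_is_subring])
  obtain x where x: "x \<in> carrier (poly_ring R)" "a \<ominus>\<^bsub>poly_ring R\<^esub> a' = g \<otimes>\<^bsub>poly_ring R\<^esub> x"
    using assms(6) unfolding pcong_def pdivides_def factor_def by blast
  obtain y where y: "y \<in> carrier (poly_ring R)" "b \<ominus>\<^bsub>poly_ring R\<^esub> b' = g \<otimes>\<^bsub>poly_ring R\<^esub> y"
    using assms(7) unfolding pcong_def pdivides_def factor_def by blast
  have "a \<otimes>\<^bsub>poly_ring R\<^esub> b \<ominus>\<^bsub>poly_ring R\<^esub> a' \<otimes>\<^bsub>poly_ring R\<^esub> b'
      = (a \<ominus>\<^bsub>poly_ring R\<^esub> a') \<otimes>\<^bsub>poly_ring R\<^esub> b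
        \<oplus>\<^bsub>poly_ring R\<^esub> a' \<otimes>\<^bsub>poly_ring R\<^esub> (b \<ominus>\<^bsub>poly_ring R\<^esub> b')"
    using assms(1-4) by algebra
  also have "\<dots> = g \<otimes>\<^bsub>poly_ring R\<^esub> (x \<otimes>\<^bsub>poly_ring R\<^esub> b \<oplus>\<^bsub>poly_ring R\<^esub> a' \<otimes>\<^bsub>poly_ring R\<^esub> y)"
    unfolding x(2) y(2) using assms(1-5) x(1) y(1) by algebra
  finally show ?thesis
    unfolding pcong_def pdivides_def using assms(1-4) x(1) y(1) by (auto intro: dividesI)
qed

lemma pcong_mult_cancel_right:
  assumes "g \<in> carrier (poly_ring R)" "pirreducible (carrier R) g"
    and "a \<in> carrier (poly_ring R)" "b \<in> carrier (poly_ring R)" "c \<in> carrier (poly_ring R)"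
    and "\<not> g pdivides c"
    and "pcong R g (a \<otimes>\<^bsub>poly_ring R\<^esub> c) (b \<otimes>\<^bsub>poly_ring R\<^esub> c)"
  shows "pcong R g a b"
proof -
  interpret UP: cring "poly_ring R" by (rule univ_poly_is_cring[OF carrier_is_subring])
  have "a \<otimes>\<^bsub>poly_ring R\<^esub> c \<ominus>\<^bsub>poly_ring R\<^esub> b \<otimes>\<^bsub>poly_ring R\<^esub> c
      = c \<otimes>\<^bsub>poly_ring R\<^esub> (a \<ominus>\<^bsub>poly_ring R\<^esub> b)"
    using assms(3-5) by algebra
  then show ?thesis
    using assms pirreducible_pdivides_mult[OF assms(1,2) assms(5)] unfolding pcong_def by auto
qed

lemma IrrD:
  assumes "f \<in> Irr R d"
  shows "f \<in> carrier (poly_ring R)" "pirreducible (carrier R) f" "lead_coeff f = \<one>" "degree f = d"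
  using assms by (auto simp: Irr_def)

lemma Irr_not_Nil: "f \<in> Irr R d \<Longrightarrow> f \<noteq> []"
  using pirreducible_not_Nil IrrD by blast

lemma Irr_pdivides_Irr_imp_eq:
  assumes g: "g \<in> Irr R d" and f: "f \<in> Irr R d'" and "g pdivides f"
  shows "g = f"
proof -
  interpret UP: domain "poly_ring R" by (rule univ_poly_is_domain[OF carrier_is_subring])
  note gI = IrrD[OF g] and fI = IrrD[OF f]
  obtain c where c: "c \<in> carrier (poly_ring R)" "f = g \<otimes>\<^bsub>poly_ring R\<^esub> c"
    using \<open>g pdivides f\<close> unfolding pdivides_def factor_def by blast
  have "c \<in> Units (poly_ring R)"
    using pirreducibleE(2,3)[OF carrier_is_subring gI(1,2)] pirreducibleE(3)[OF carrier_is_subring fI(1,2) gI(1) c]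
    by blast
  then obtain k where k: "k \<in> carrier R" "k \<noteq> \<zero>" "c = [k]"
    using univ_poly_units[OF carrier_is_subfield] by auto
  have "lead_coeff f = lead_coeff g \<otimes> k"
    using poly_mult_lead_coeff[OF carrier_is_subring, of g c] gI(1) c Irr_not_Nil[OF g] k
    by (simp add: univ_poly_carrier univ_poly_mult)
  then have "c = \<one>\<^bsub>poly_ring R\<^esub>"
    using gI(3) fI(3) k by (simp add: univ_poly_one)
  then show ?thesis using c gI(1) by simp
qed

lemma Irr_not_pdivides_Irr:
  "g \<in> Irr R d \<Longrightarrow> f \<in> Irr R d' \<Longrightarrow> d \<noteq> d' \<Longrightarrow> \<not> g pdivides f"
  using Irr_pdivides_Irr_imp_eq IrrD(4) by metis

lemma Irr_mult_eq_imp_doubleton_eq: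
  assumes f: "f1 \<in> Irr R d1" "f2 \<in> Irr R d2" "f3 \<in> Irr R d3" "f4 \<in> Irr R d4"
    and eq: "f1 \<otimes>\<^bsub>poly_ring R\<^esub> f2 = f3 \<otimes>\<^bsub>poly_ring R\<^esub> f4"
  shows "{f1, f2} = {f3, f4}"
proof -
  interpret UP: domain "poly_ring R" by (rule univ_poly_is_domain[OF carrier_is_subring])
  note c = IrrD(1)[OF f(1)] IrrD(1)[OF f(2)] IrrD(1)[OF f(3)] IrrD(1)[OF f(4)]
  have "f1 pdivides f3 \<otimes>\<^bsub>poly_ring R\<^esub> f4"
    unfolding pdivides_def eq[symmetric] using c by (intro dividesI[of f2]) auto
  then have "f1 = f3 \<or> f1 = f4"
    using pirreducible_pdivides_mult[OF c(1) IrrD(2)[OF f(1)] c(3,4)]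
      Irr_pdivides_Irr_imp_eq f by blast
  moreover have "f1 \<noteq> \<zero>\<^bsub>poly_ring R\<^esub>"
    using Irr_not_Nil[OF f(1)] by (simp add: univ_poly_zero)
  ultimately show ?thesis
  proof (elim disjE)
    assume "f1 = f3"
    then have "f2 = f4"
      using eq UP.m_lcancel[OF \<open>f1 \<noteq> _\<close> c(1,2,4)] by simp
    with \<open>f1 = f3\<close> show ?thesis by simp
  next
    assume "f1 = f4"
    then have "f2 = f3"
      using eq UP.m_lcancel[OF \<open>f1 \<noteq> _\<close> c(1,2,3)] UP.m_comm[OF c(3,4)] by simp
    with \<open>f1 = f4\<close> show ?thesis by auto
  qed
qed

lemma degree_mult:
  assumes "a \<in> carrier (poly_ring R)" "b \<in> carrier (poly_ring R)" "a \<noteq> []" "b \<noteq> []"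
  shows "degree (a \<otimes>\<^bsub>poly_ring R\<^esub> b) = degree a + degree b"
  using poly_mult_degree_eq[OF carrier_is_subring, of a b] assms
  by (simp add: univ_poly_carrier univ_poly_mult)

lemma degree_minus_le:
  assumes "a \<in> carrier (poly_ring R)" "b \<in> carrier (poly_ring R)"
  shows "degree (a \<ominus>\<^bsub>poly_ring R\<^esub> b) \<le> max (degree a) (degree b)"
  using poly_add_degree[of a "map (a_inv R) b"]
  unfolding a_minus_def univ_poly_add univ_poly_a_inv_def'[OF carrier_is_subring assms(2)]
  by auto

lemma sum_degree_le_degree:
  assumes "finite S" "h \<in> carrier (poly_ring R)" "h \<noteq> []"
    and "\<And>i. i \<in> S \<Longrightarrow> G i \<in> carrier (poly_ring R) \<and> pirreducible (carrier R) (G i) \<and> G i pdivides h"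
    and "\<And>i j. i \<in> S \<Longrightarrow> j \<in> S \<Longrightarrow> i \<noteq> j \<Longrightarrow> \<not> G j pdivides G i"
  shows "(\<Sum>i\<in>S. degree (G i)) \<le> degree h"
  using assms
proof (induction S arbitrary: h rule: finite_induct)
  case empty
  then show ?case by simp
next
  case (insert i S)
  interpret UP: domain "poly_ring R" by (rule univ_poly_is_domain[OF carrier_is_subring])
  have Gi: "G i \<in> carrier (poly_ring R)" "pirreducible (carrier R) (G i)" "G i pdivides h"
    using insert.prems(3) by auto
  obtain h' where h': "h' \<in> carrier (poly_ring R)" "h = G i \<otimes>\<^bsub>poly_ring R\<^esub> h'"
    using Gi(3) unfolding pdivides_def factor_def by blast
  have "h' \<noteq> []"
    using h' insert.prems(2) UP.r_null[OF Gi(1), unfolded univ_poly_zero] by auto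
  have "G j pdivides h'" if "j \<in> S" for j
  proof -
    have "\<not> G j pdivides G i" "G j pdivides G i \<or> G j pdivides h'"
      using insert.prems(3)[of j] insert.prems(4)[of i j] insert.hyps(2) that h'
        pirreducible_pdivides_mult[OF _ _ Gi(1) h'(1)] by auto
    then show ?thesis by blast
  qed
  then have "(\<Sum>j\<in>S. degree (G j)) \<le> degree h'"
    using insert.IH[OF h'(1) \<open>h' \<noteq> []\<close>] insert.prems(3,4) by blast
  moreover have "degree h = degree (G i) + degree h'"
    using degree_mult[OF Gi(1) h'(1) pirreducible_not_Nil[OF Gi(1,2)] \<open>h' \<noteq> []\<close>] h'(2) by simp
  ultimately show ?case using insert.hyps by simp
qed

lemma pcong_Irr_family_imp_eq:
  assumes "finite S" "\<And>i. i \<in> S \<Longrightarrow> G i \<in> Irr R (d i)" "inj_on d S"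
    and "a \<in> carrier (poly_ring R)" "b \<in> carrier (poly_ring R)"
    and "\<And>i. i \<in> S \<Longrightarrow> pcong R (G i) a b"
    and "degree a < (\<Sum>i\<in>S. d i)" "degree b < (\<Sum>i\<in>S. d i)"
  shows "a = b"
proof (rule ccontr)
  interpret UP: cring "poly_ring R" by (rule univ_poly_is_cring[OF carrier_is_subring])
  assume "a \<noteq> b"
  then have "a \<ominus>\<^bsub>poly_ring R\<^esub> b \<noteq> []"
    using assms(4,5) UP.r_right_minus_eq by (auto simp: univ_poly_zero)
  then have "(\<Sum>i\<in>S. degree (G i)) \<le> degree (a \<ominus>\<^bsub>poly_ring R\<^esub> b)"
  proof (rule sum_degree_le_degree[OF assms(1) UP.minus_closed[OF assms(4,5)]])
    fix i assume "i \<in> S"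
    then show "G i \<in> carrier (poly_ring R) \<and> pirreducible (carrier R) (G i)
        \<and> G i pdivides (a \<ominus>\<^bsub>poly_ring R\<^esub> b)"
      using IrrD[OF assms(2)] assms(6) unfolding pcong_def by blast
  next
    fix i j assume "i \<in> S" "j \<in> S" "i \<noteq> j"
    then have "d j \<noteq> d i"
      using assms(3) unfolding inj_on_def by blast
    then show "\<not> G j pdivides G i"
      using Irr_not_pdivides_Irr assms(2) \<open>i \<in> S\<close> \<open>j \<in> S\<close> by blast
  qed
  moreover have "(\<Sum>i\<in>S. degree (G i)) = (\<Sum>i\<in>S. d i)"
    using assms(2) IrrD(4) by (meson sum.cong)
  ultimately show False
    using degree_minus_le[OF assms(4,5)] assms(7,8) by linarith
qed

lemma card_polys_degree_less:
  assumes "finite (carrier R)" "d \<ge> 1"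
  shows "card {h \<in> carrier (poly_ring R). degree h < d} = card (carrier R) ^ d"
proof -
  let ?L = "{xs. set xs \<subseteq> carrier R \<and> length xs = d}"
  have "inj_on normalize ?L"
  proof (rule inj_onI)
    fix xs ys assume "xs \<in> ?L" "ys \<in> ?L" "normalize xs = normalize ys"
    have "xs = replicate (length xs - length (normalize xs)) \<zero> @ normalize xs"
      by (rule normalize_trick)
    also have "\<dots> = replicate (length ys - length (normalize ys)) \<zero> @ normalize ys"
      using \<open>xs \<in> ?L\<close> \<open>ys \<in> ?L\<close> \<open>normalize xs = normalize ys\<close> by simp
    also have "\<dots> = ys"
      by (rule normalize_trick[symmetric])
    finally show "xs = ys" .
  qed
  moreover have "normalize ` ?L = {h \<in> carrier (poly_ring R). degree h < d}"
  proof (intro equalityI subsetI)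
    fix h assume "h \<in> normalize ` ?L"
    then obtain xs where xs: "xs \<in> ?L" "h = normalize xs" by blast
    then have "polynomial (carrier R) h" "length h \<le> d"
      using normalize_gives_polynomial normalize_length_le[of xs] by auto
    then show "h \<in> {h \<in> carrier (poly_ring R). degree h < d}"
      using assms(2) by (auto simp: univ_poly_carrier)
  next
    fix h assume h: "h \<in> {h \<in> carrier (poly_ring R). degree h < d}"
    then have ph: "polynomial (carrier R) h" by (simp add: univ_poly_carrier)
    let ?xs = "replicate (d - length h) \<zero> @ h"
    have "?xs \<in> ?L" using h assms(2) polynomial_incl[OF ph] by auto
    moreover have "normalize ?xs = h"
      using normalize_replicate_zero normalize_polynomial[OF ph] by simp
    ultimately show "h \<in> normalize ` ?L" by (metis image_eqI)
  qed
  ultimately show ?thesis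
    using card_image[of normalize ?L] card_lists_length_eq[OF assms(1)] by simp
qed

end

section \<open>Discrete logarithms modulo an irreducible polynomial\<close>

locale primitive_root_mod = field R for R (structure) +
  fixes g w :: "'a list"
  assumes finite_carrier: "finite (carrier R)"
    and g_carrier: "g \<in> carrier (poly_ring R)"
    and g_pirreducible: "pirreducible (carrier R) g"
    and w_generates: "is_gen R g w"
begin

abbreviation units_card :: nat where
  "units_card \<equiv> card (carrier R) ^ degree g - 1"

definition residue :: "nat \<Rightarrow> 'a list" where
  "residue e = (w [^]\<^bsub>poly_ring R\<^esub> e) pmod g"

definition nonzero_residues :: "'a list set" where
  "nonzero_residues = {h \<in> carrier (poly_ring R). degree h < degree g} - {[]}"

lemma w_carrier: "w \<in> carrier (poly_ring R)"
  using w_generates unfolding is_gen_def by simp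

lemma w_pow_carrier: "w [^]\<^bsub>poly_ring R\<^esub> (e::nat) \<in> carrier (poly_ring R)"
proof -
  interpret UP: cring "poly_ring R" by (rule univ_poly_is_cring[OF carrier_is_subring])
  show ?thesis using w_carrier by simp
qed

lemma pcong_w_pow_iff: "pcong R g (w [^]\<^bsub>poly_ring R\<^esub> a) (w [^]\<^bsub>poly_ring R\<^esub> b) \<longleftrightarrow> residue a = residue b"
  unfolding residue_def using pcong_iff_pmod[OF w_pow_carrier w_pow_carrier g_carrier] .

lemma not_pdivides_w_pow: "\<not> g pdivides w [^]\<^bsub>poly_ring R\<^esub> (e::nat)"
proof (induction e)
  case 0
  interpret UP: cring "poly_ring R" by (rule univ_poly_is_cring[OF carrier_is_subring])
  show ?case
    using UP.divides_one[OF g_carrier] pirreducibleE(2)[OF carrier_is_subring g_carrier g_pirreducible]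
    unfolding pdivides_def by simp
next
  case (Suc e)
  interpret UP: cring "poly_ring R" by (rule univ_poly_is_cring[OF carrier_is_subring])
  show ?case
    using pirreducible_pdivides_mult[OF g_carrier g_pirreducible w_pow_carrier w_carrier] Suc.IH
      w_generates unfolding is_gen_def by auto
qed

lemma finite_nonzero_residues: "finite nonzero_residues"
  and card_nonzero_residues: "card nonzero_residues = units_card"
proof -
  have "degree g \<ge> 1"
    using pirreducible_degree[OF carrier_is_subfield g_carrier g_pirreducible] .
  then have card: "card {h \<in> carrier (poly_ring R). degree h < degree g} = card (carrier R) ^ degree g"
    and "[] \<in> {h \<in> carrier (poly_ring R). degree h < degree g}"
    using card_polys_degree_less[OF finite_carrier] by (auto simp: univ_poly_zero_closed)
  moreover have "card (carrier R) > 0"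
    using finite_carrier one_closed card_gt_0_iff by blast
  then have "finite {h \<in> carrier (poly_ring R). degree h < degree g}"
    using card by (intro card_ge_0_finite) simp
  ultimately show "finite nonzero_residues" "card nonzero_residues = units_card"
    unfolding nonzero_residues_def by simp_all
qed

lemma residue_mem: "residue e \<in> nonzero_residues"
proof -
  have "residue e \<in> carrier (poly_ring R)"
    unfolding residue_def using long_division_closed[OF carrier_is_subfield w_pow_carrier g_carrier] by simp
  moreover have "residue e \<noteq> []"
    unfolding residue_def using pmod_zero_iff_pdivides[OF carrier_is_subfield w_pow_carrier g_carrier]
      not_pdivides_w_pow by simp
  moreover have "degree (residue e) < degree g"
    using pmod_degree[OF carrier_is_subfield w_pow_carrier g_carrier
        pirreducible_not_Nil[OF g_carrier g_pirreducible]] \<open>residue e \<noteq> []\<close>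
    unfolding residue_def by auto
  ultimately show ?thesis unfolding nonzero_residues_def by simp
qed

lemma nonzero_residues_subset_range: "nonzero_residues \<subseteq> range residue"
proof
  fix h assume h: "h \<in> nonzero_residues"
  then have hc: "h \<in> carrier (poly_ring R)" "h \<noteq> []" "degree h < degree g"
    unfolding nonzero_residues_def by auto
  then have "\<not> g pdivides h"
    using pdivides_imp_degree_le[OF carrier_is_subring g_carrier hc(1,2)] by auto
  then obtain e :: nat where "pcong R g (w [^]\<^bsub>poly_ring R\<^esub> e) h"
    using w_generates hc(1) unfolding is_gen_def by blast
  then have "residue e = h pmod g"
    unfolding residue_def using pcong_iff_pmod[OF w_pow_carrier hc(1) g_carrier] by simp
  also have "\<dots> = h"
    using pmod_const(2)[OF carrier_is_subfield hc(1) g_carrier hc(3)] .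
  finally show "h \<in> range residue" by (metis rangeI)
qed

lemma residue_add_eq_iff: "residue (a + t) = residue a \<longleftrightarrow> residue t = residue 0"
proof -
  interpret UP: cring "poly_ring R" by (rule univ_poly_is_cring[OF carrier_is_subring])
  let ?P = "poly_ring R"
  have "residue (a + t) = residue a \<longleftrightarrow>
      pcong R g (w [^]\<^bsub>?P\<^esub> t \<otimes>\<^bsub>?P\<^esub> w [^]\<^bsub>?P\<^esub> a) (w [^]\<^bsub>?P\<^esub> (0::nat) \<otimes>\<^bsub>?P\<^esub> w [^]\<^bsub>?P\<^esub> a)"
    using pcong_w_pow_iff[of "a + t" a] w_carrier by (simp add: UP.nat_pow_mult UP.m_comm)
  also have "\<dots> \<longleftrightarrow> pcong R g (w [^]\<^bsub>?P\<^esub> t) (w [^]\<^bsub>?P\<^esub> (0::nat))"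
    using pcong_mult_cancel_right[OF g_carrier g_pirreducible w_pow_carrier w_pow_carrier w_pow_carrier
        not_pdivides_w_pow]
      pcong_mult[OF w_pow_carrier w_pow_carrier w_pow_carrier w_pow_carrier g_carrier]
      pcong_w_pow_iff by blast
  finally show ?thesis using pcong_w_pow_iff[of t 0] by simp
qed

lemma residue_period_exists: "\<exists>t. 0 < t \<and> residue t = residue 0"
proof -
  have "card (residue ` {0..units_card}) \<le> card nonzero_residues"
    using residue_mem finite_nonzero_residues by (intro card_mono) auto
  then have "\<not> inj_on residue {0..units_card}"
    using card_nonzero_residues by (intro pigeonhole) simp
  then obtain a b where "a < b" "residue a = residue b"
    unfolding inj_on_def by (metis linorder_neqE_nat)
  then have "residue (a + (b - a)) = residue a" by simp
  then show ?thesis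
    using residue_add_eq_iff \<open>a < b\<close> by (metis zero_less_diff)
qed

definition period :: nat where
  "period = (LEAST t. 0 < t \<and> residue t = residue 0)"

lemma period_pos: "0 < period" and residue_period: "residue period = residue 0"
  using LeastI_ex[OF residue_period_exists] unfolding period_def by auto

lemma period_le: "0 < t \<Longrightarrow> residue t = residue 0 \<Longrightarrow> period \<le> t"
  unfolding period_def by (rule Least_le) simp

lemma residue_add_mult_period: "residue (a + period * k) = residue a"
proof (induction k)
  case (Suc k)
  have "residue ((a + period * k) + period) = residue (a + period * k)"
    using residue_add_eq_iff residue_period by blast
  then show ?case using Suc.IH by (simp add: algebra_simps)
qed simp

lemma residue_mod_period: "residue (e mod period) = residue e"
  using residue_add_mult_period[of "e mod period" "e div period"] by simp

lemma inj_on_residue: "inj_on residue {..<period}"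
proof -
  have "a = b" if "a < b" "b < period" "residue a = residue b" for a b
  proof -
    have "residue (a + (b - a)) = residue a" using that by simp
    then have "residue (b - a) = residue 0"
      using residue_add_eq_iff by blast
    then have "period \<le> b - a"
      using period_le \<open>a < b\<close> by simp
    then show ?thesis using that by simp
  qed
  then show ?thesis
    unfolding inj_on_def by (metis lessThan_iff linorder_neqE_nat)
qed

lemma period_eq_units_card: "period = units_card"
proof -
  have "residue ` {..<period} = nonzero_residues"
  proof (intro equalityI subsetI)
    fix h assume "h \<in> nonzero_residues"
    then obtain e where "h = residue e"
      using nonzero_residues_subset_range by blast
    then have "h = residue (e mod period)" "e mod period < period"
      using residue_mod_period period_pos by simp_all
    then show "h \<in> residue ` {..<period}" by blast
  qed (use residue_mem in blast)
  then show ?thesis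
    using card_image[OF inj_on_residue] card_nonzero_residues by simp
qed

lemma units_card_pos: "0 < units_card"
  using period_pos period_eq_units_card by simp

lemma pcong_w_pow_mod_units_card:
  "pcong R g (w [^]\<^bsub>poly_ring R\<^esub> e) (w [^]\<^bsub>poly_ring R\<^esub> (e mod units_card))"
  using pcong_w_pow_iff residue_mod_period period_eq_units_card by simp

lemma ex1_pcong_w_pow:
  assumes "h \<in> carrier (poly_ring R)" "\<not> g pdivides h"
  shows "\<exists>!e. e < units_card \<and> pcong R g (w [^]\<^bsub>poly_ring R\<^esub> e) h"
proof -
  have pcong_h: "pcong R g (w [^]\<^bsub>poly_ring R\<^esub> e) h \<longleftrightarrow> residue e = h pmod g" for e
    unfolding residue_def using pcong_iff_pmod[OF w_pow_carrier assms(1) g_carrier] .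
  obtain e :: nat where "pcong R g (w [^]\<^bsub>poly_ring R\<^esub> e) h"
    using w_generates assms unfolding is_gen_def by blast
  then have "e mod units_card < units_card \<and> pcong R g (w [^]\<^bsub>poly_ring R\<^esub> (e mod units_card)) h"
    using pcong_h residue_mod_period period_eq_units_card units_card_pos by simp
  moreover have "e' = e''" if "e' < units_card" "e'' < units_card" "residue e' = residue e''" for e' e''
    using inj_on_residue that period_eq_units_card unfolding inj_on_def by simp
  ultimately show ?thesis
    using pcong_h by metis
qed

lemma dlog_less_units_card:
  assumes "h \<in> carrier (poly_ring R)" "\<not> g pdivides h"
  shows "dlog R g w h < units_card"
  using theI'[OF ex1_pcong_w_pow[OF assms]] unfolding dlog_def by auto

lemma pcong_w_pow_dlog:
  assumes "h \<in> carrier (poly_ring R)" "\<not> g pdivides h"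
  shows "pcong R g (w [^]\<^bsub>poly_ring R\<^esub> dlog R g w h) h"
  using theI'[OF ex1_pcong_w_pow[OF assms]] unfolding dlog_def by auto

lemma pcong_of_dlog_eq:
  assumes "h \<in> carrier (poly_ring R)" "\<not> g pdivides h"
    and "h' \<in> carrier (poly_ring R)" "\<not> g pdivides h'"
    and "dlog R g w h = dlog R g w h'"
  shows "pcong R g h h'"
  using pcong_w_pow_dlog[OF assms(1,2)] pcong_w_pow_dlog[OF assms(3,4)] assms(5)
    pcong_iff_pmod[OF w_pow_carrier _ g_carrier] pcong_iff_pmod[OF assms(1,3) g_carrier] assms(1,3)
  by metis

lemma pcong_w_pow_dlog_add:
  assumes "a \<in> carrier (poly_ring R)" "\<not> g pdivides a" "b \<in> carrier (poly_ring R)" "\<not> g pdivides b"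
  shows "pcong R g (w [^]\<^bsub>poly_ring R\<^esub> (dlog R g w a + dlog R g w b)) (a \<otimes>\<^bsub>poly_ring R\<^esub> b)"
proof -
  interpret UP: cring "poly_ring R" by (rule univ_poly_is_cring[OF carrier_is_subring])
  show ?thesis
    using pcong_mult[OF w_pow_carrier assms(1) w_pow_carrier assms(3) g_carrier
        pcong_w_pow_dlog[OF assms(1,2)] pcong_w_pow_dlog[OF assms(3,4)]] w_carrier
    by (simp add: UP.nat_pow_mult)
qed

lemma pcong_mult_of_dlog_add:
  assumes "a \<in> carrier (poly_ring R)" "\<not> g pdivides a" "b \<in> carrier (poly_ring R)" "\<not> g pdivides b"
    and "c \<in> carrier (poly_ring R)" "\<not> g pdivides c" "d \<in> carrier (poly_ring R)" "\<not> g pdivides d"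
    and "(dlog R g w a + dlog R g w b) mod units_card = (dlog R g w c + dlog R g w d) mod units_card"
  shows "pcong R g (a \<otimes>\<^bsub>poly_ring R\<^esub> b) (c \<otimes>\<^bsub>poly_ring R\<^esub> d)"
proof -
  interpret UP: cring "poly_ring R" by (rule univ_poly_is_cring[OF carrier_is_subring])
  let ?e = "dlog R g w"
  have pm: "pcong R g x y \<longleftrightarrow> x pmod g = y pmod g"
    if "x \<in> carrier (poly_ring R)" "y \<in> carrier (poly_ring R)" for x y
    using pcong_iff_pmod[OF that g_carrier] .
  have "(a \<otimes>\<^bsub>poly_ring R\<^esub> b) pmod g = (w [^]\<^bsub>poly_ring R\<^esub> ((?e a + ?e b) mod units_card)) pmod g"
    using pcong_w_pow_dlog_add[OF assms(1-4)] pcong_w_pow_mod_units_card[of "?e a + ?e b"]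
      pm w_pow_carrier assms(1,3) by simp
  also have "\<dots> = (c \<otimes>\<^bsub>poly_ring R\<^esub> d) pmod g"
    using pcong_w_pow_dlog_add[OF assms(5-8)] pcong_w_pow_mod_units_card[of "?e c + ?e d"]
      pm w_pow_carrier assms(5,7,9) by simp
  finally show ?thesis using pm assms by simp
qed

end

section \<open>Digits in a generalised base\<close>

lemma mod_add_div_digit:
  fixes x y W P :: nat
  assumes "x mod (W * P) = a + r * W" "y mod (W * P) = a' + r' * W" "a < W" "a' < W"
  shows "(x + y) mod (W * P) div W = (r + r' + (a + a') div W) mod P"
proof -
  have "(x + y) mod (W * P) = (x mod (W * P) + y mod (W * P)) mod (W * P)"
    by (simp add: mod_add_eq)
  also have "\<dots> = (a + a' + (r + r') * W) mod (W * P)"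
    using assms(1,2) by (simp add: algebra_simps)
  finally have "(x + y) mod (W * P) = (a + a' + (r + r') * W) mod (W * P)" .
  then have "(x + y) mod (W * P) div W = (a + a' + (r + r') * W) div W mod P"
    using mod_mult2_eq[of "a + a' + (r + r') * W" W P] assms(3) by simp
  then show ?thesis
    using assms(3) by (simp add: add.commute)
qed

corollary mod_add_div_digit_no_carry:
  fixes x y V P :: nat
  assumes "x mod (V * P) = a + e * V" "y mod (V * P) = a' + e' * V" "a + a' < V"
  shows "(x + y) mod (V * P) div V = (e + e') mod P"
  using mod_add_div_digit[OF assms(1,2)] assms(3) by simp

definition place_value :: "(nat \<Rightarrow> nat) \<Rightarrow> nat \<Rightarrow> nat" where
  "place_value b j = (\<Prod>l<j. b (Suc l))"

lemma place_value_0 [simp]: "place_value b 0 = 1"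
  by (simp add: place_value_def)

lemma place_value_Suc: "place_value b (Suc j) = place_value b j * b (Suc j)"
  by (simp add: place_value_def)

lemma place_value_pos: "(\<And>l. 0 < b l) \<Longrightarrow> 0 < place_value b j"
  by (induction j) (auto simp: place_value_Suc)

lemma place_value_mono: "(\<And>l. 0 < b l) \<Longrightarrow> i \<le> j \<Longrightarrow> place_value b i \<le> place_value b j"
proof (induction j)
  case (Suc j)
  show ?case
  proof (cases "i = Suc j")
    case False
    then have "place_value b i \<le> place_value b j" using Suc by simp
    also have "\<dots> \<le> place_value b (Suc j)"
      using Suc.prems(1)[of "Suc j"] by (simp add: place_value_Suc)
    finally show ?thesis .
  qed simp
qed simp

lemma place_value_dvd: "i \<le> j \<Longrightarrow> place_value b i dvd place_value b j"
  by (induction j) (auto simp: place_value_Suc le_Suc_eq)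

lemma genbase_eq_sum_place_value: "genbase b xs = (\<Sum>j<length xs. xs ! j * place_value b j)"
  by (simp add: genbase_def place_value_def)

lemma sum_digits_less_place_value:
  assumes "\<And>l. l < j \<Longrightarrow> x l < b (Suc l)"
  shows "(\<Sum>l<j. x l * place_value b l) < place_value b j"
  using assms
proof (induction j)
  case (Suc j)
  then have "(\<Sum>l<Suc j. x l * place_value b l) < place_value b j + x j * place_value b j"
    by simp
  also have "\<dots> = Suc (x j) * place_value b j"
    by simp
  also have "\<dots> \<le> place_value b j * b (Suc j)"
    using Suc.prems[of j] by (simp only: mult.commute[of _ "place_value b j"] mult_le_mono2 Suc_leI)
  finally show ?case by (simp add: place_value_Suc)
qed simp

lemma genbase_mod_place_value:
  assumes "\<And>l. l < j \<Longrightarrow> xs ! l < b (Suc l)" "j \<le> length xs"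
  shows "genbase b xs mod place_value b j = (\<Sum>l<j. xs ! l * place_value b l)"
proof -
  have split: "{..<length xs} = {..<j} \<union> {j..<length xs}" using assms(2) by auto
  have "genbase b xs = (\<Sum>l<j. xs ! l * place_value b l) + (\<Sum>l\<in>{j..<length xs}. xs ! l * place_value b l)"
    unfolding genbase_eq_sum_place_value split by (subst sum.union_disjoint) auto
  moreover have "place_value b j dvd (\<Sum>l\<in>{j..<length xs}. xs ! l * place_value b l)"
    by (intro dvd_sum) (auto intro: dvd_mult place_value_dvd)
  ultimately show ?thesis
    using sum_digits_less_place_value[of j "\<lambda>l. xs ! l" b] assms(1)
    by (metis (no_types, lifting) dvd_def mod_less mod_mult_self2)
qed

lemma bseq_pos: "2 \<le> q \<Longrightarrow> 1 \<le> p \<Longrightarrow> 0 < bseq q p l"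
  using one_less_power[of q l] by (cases l) (auto simp: bseq_def)

lemma bseq_odd: "bseq q p (2 * t + 1) = q ^ (2 * t + 1) - 1"
  and bseq_even: "bseq q p (2 * t + 2) = p"
  by (simp_all add: bseq_def)

text \<open>The digit list of \<open>[s \<rho>\<^sub>k E\<^sub>k \<dots> \<rho>\<^sub>1 E\<^sub>1]\<close>, lowest digit first: position \<open>2 t\<close> holds
  \<open>E (t + 1)\<close>, position \<open>2 t + 1\<close> holds \<open>\<rho> (t + 1)\<close> and position \<open>2 k\<close> holds \<open>s\<close>.\<close>
definition coded_digits :: "nat \<Rightarrow> nat \<Rightarrow> (nat \<Rightarrow> nat) \<Rightarrow> (nat \<Rightarrow> nat) \<Rightarrow> nat list" where
  "coded_digits k s E \<rho> = map (\<lambda>j. if j = 2 * k then s else if even j then E (j div 2 + 1) else \<rho> ((j + 1) div 2))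
                [0..<2 * k + 1]"

locale coded_number =
  fixes q p k s :: nat and E \<rho> :: "nat \<Rightarrow> nat"
  assumes q_ge: "2 \<le> q" and p_ge: "2 \<le> p"
    and E_less: "\<And>i. 1 \<le> i \<Longrightarrow> i \<le> k \<Longrightarrow> E i < q ^ (2 * i - 1) - 1"
    and \<rho>_less: "\<And>i. 1 \<le> i \<Longrightarrow> i \<le> k \<Longrightarrow> \<rho> i < p"
    and s_ge: "1 \<le> s" and s_le: "s \<le> q ^ (3 * k)"
begin

abbreviation digits :: "nat list" where
  "digits \<equiv> coded_digits k s E \<rho>"

abbreviation number :: nat where
  "number \<equiv> genbase (bseq q p) digits"

abbreviation D :: "nat \<Rightarrow> nat" where
  "D \<equiv> place_value (bseq q p)"

lemma D_pos: "0 < D j"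
  using bseq_pos q_ge p_ge by (intro place_value_pos) simp

lemma digits_even: "t < k \<Longrightarrow> digits ! (2 * t) = E (Suc t)"
  and digits_odd: "t < k \<Longrightarrow> digits ! (2 * t + 1) = \<rho> (Suc t)"
  and digits_top: "digits ! (2 * k) = s"
  by (simp_all add: coded_digits_def nth_append del: upt_Suc)

lemma length_digits: "length digits = 2 * k + 1"
  by (simp add: coded_digits_def)

lemma digit_less_base: "j < 2 * k \<Longrightarrow> digits ! j < bseq q p (Suc j)"
proof (cases "even j")
  case True
  assume "j < 2 * k"
  with True obtain t where "j = 2 * t" "t < k" by auto
  then show ?thesis
    using digits_even E_less[of "Suc t"] bseq_odd[of q p t] by simp
next
  case False
  assume "j < 2 * k"
  from False obtain t where "j = 2 * t + 1" by (rule oddE)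
  with \<open>j < 2 * k\<close> have "j = 2 * t + 1" "t < k" by simp_all
  then show ?thesis
    using digits_odd \<rho>_less[of "Suc t"] bseq_even[of q p t] by simp
qed

lemma number_mod_D: "j \<le> 2 * k \<Longrightarrow> number mod D j = (\<Sum>l<j. digits ! l * D l)"
  using digit_less_base length_digits
  by (intro genbase_mod_place_value) auto

lemma number_mod_odd:
  "t < k \<Longrightarrow> number mod D (2 * t + 1) = number mod D (2 * t) + E (Suc t) * D (2 * t)"
  using number_mod_D[of "2 * t"] number_mod_D[of "2 * t + 1"] digits_even by simp

lemma number_mod_even:
  "t < k \<Longrightarrow> number mod D (2 * t + 2) = number mod D (2 * t + 1) + \<rho> (Suc t) * D (2 * t + 1)"
  using number_mod_D[of "2 * t + 1"] number_mod_D[of "2 * t + 2"] digits_odd by simp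

lemma number_eq: "number = number mod D (2 * k) + s * D (2 * k)"
proof -
  have "number = (\<Sum>l<Suc (2 * k). digits ! l * D l)"
    unfolding genbase_eq_sum_place_value length_digits by simp
  then show ?thesis
    using number_mod_D[of "2 * k"] digits_top by simp
qed

lemma D_ge_number: "D (2 * k) \<le> number"
proof -
  have "D (2 * k) \<le> s * D (2 * k)" using s_ge by simp
  then show ?thesis using number_eq by linarith
qed

lemma q_pow_le_bases: "q ^ (3 * k) + 1 \<le> bseq q p (2 * k + 1) * bseq q p (2 * k + 2) * bseq q p (2 * k + 3)"
proof -
  have q_pow: "q ^ n \<le> q ^ (n + 1) - 1" for n
  proof -
    have "2 * q ^ n \<le> q * q ^ n" using q_ge by (rule mult_le_mono1)
    then have "2 * q ^ n \<le> q ^ (n + 1)" by simp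
    moreover have "1 \<le> q ^ n" using q_ge by simp
    ultimately show ?thesis by linarith
  qed
  have "q ^ (3 * k) \<le> q ^ (4 * k + 2)" "1 \<le> q ^ (3 * k)"
    using q_ge power_increasing[of "3 * k" "4 * k + 2" q] by (simp_all del: power_Suc)
  then have "q ^ (3 * k) + 1 \<le> 2 * q ^ (4 * k + 2)" by linarith
  also have "\<dots> = q ^ (2 * k) * 2 * q ^ (2 * k + 2)"
    by (simp add: power_add[symmetric] algebra_simps)
  also have "\<dots> \<le> (q ^ (2 * k + 1) - 1) * p * (q ^ (2 * k + 3) - 1)"
    using q_pow[of "2 * k"] q_pow[of "2 * k + 2"] p_ge by (intro mult_le_mono) (simp_all add: numeral_3_eq_3)
  finally show ?thesis
    using bseq_odd[of q p k] bseq_even[of q p k] bseq_odd[of q p "k + 1"] by (simp add: numeral_3_eq_3)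
qed

lemma number_less_D: "number < D (2 * k + 3)"
proof -
  have "number < D (2 * k) + s * D (2 * k)"
    using number_eq mod_less_divisor[OF D_pos, of number "2 * k"] by linarith
  also have "\<dots> \<le> (q ^ (3 * k) + 1) * D (2 * k)"
    using s_le by simp
  also have "\<dots> \<le> (bseq q p (2 * k + 1) * bseq q p (2 * k + 2) * bseq q p (2 * k + 3)) * D (2 * k)"
    using q_pow_le_bases by (rule mult_le_mono1)
  also have "\<dots> = D (2 * k + 3)"
    by (simp add: numeral_3_eq_3 place_value_Suc)
  finally show ?thesis .
qed

end

section \<open>The case analysis on levels\<close>

lemma square_plus_4_le:
  fixes m :: nat
  assumes "200 \<le> m"
  shows "70 * (m + 4)\<^sup>2 \<le> 100 * m\<^sup>2"
proof -
  have "200 * m \<le> m * m" using assms by simp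
  moreover have "(m + 4)\<^sup>2 = m * m + 8 * m + 16" "m\<^sup>2 = m * m"
    by (simp_all add: power2_eq_square algebra_simps)
  ultimately show ?thesis using assms by linarith
qed

text \<open>Here \<open>m \<le> u\<close> are the two low levels and \<open>c \<le> M\<close> the two high ones.\<close>
lemma square_gap_large:
  fixes m u M c :: nat
  assumes "200 \<le> m" "u \<le> m + 2" "m \<le> M" "M \<le> c + 1" "c \<le> M"
    and "100 * m\<^sup>2 < 35 * (u + 1)\<^sup>2 + 35 * (M + 1)\<^sup>2"
  shows "u + 3 \<le> c" "35 * (M + 1)\<^sup>2 + 100 * (u + 2)\<^sup>2 \<le> 100 * c\<^sup>2"
proof -
  define T where "T = M + 1"
  have m2: "200 * m \<le> m * m" using assms(1) by simp
  have "(u + 1)\<^sup>2 \<le> (m + 3)\<^sup>2" "(u + 2)\<^sup>2 \<le> (m + 4)\<^sup>2"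
    using assms(2) by (simp_all add: power_mono)
  then have u1: "(u + 1)\<^sup>2 \<le> m * m + 6 * m + 9" and u2: "(u + 2)\<^sup>2 \<le> m * m + 8 * m + 16"
    by (simp_all add: power2_eq_square algebra_simps)
  have TT: "(M + 1)\<^sup>2 = T * T" unfolding T_def by (simp add: power2_eq_square)
  have big: "100 * (m * m) < 35 * (u + 1)\<^sup>2 + 35 * (T * T)"
    using assms(6) TT by (simp add: power2_eq_square algebra_simps)
  have T_ge: "m + 7 \<le> T"
  proof (rule ccontr)
    assume "\<not> m + 7 \<le> T"
    then have "T * T \<le> (m + 6) * (m + 6)" by (simp add: mult_le_mono)
    then have "T * T \<le> m * m + 12 * m + 36" by (simp add: algebra_simps)
    then show False using big u1 m2 assms(1) by linarith
  qed
  then show "u + 3 \<le> c" using assms(2,4) unfolding T_def by linarith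
  have "200 * T \<le> T * T" using T_ge assms(1) by simp
  moreover have "T * T \<le> c * c + 4 * c + 4"
    using mult_le_mono[of T "c + 2" T "c + 2"] assms(4) unfolding T_def by (simp add: algebra_simps)
  moreover have "c \<le> T" using assms(5) unfolding T_def by simp
  ultimately have "35 * (T * T) + 100 * (u + 2)\<^sup>2 \<le> 100 * (c * c)"
    using big u1 u2 m2 assms(1) by linarith
  then show "35 * (M + 1)\<^sup>2 + 100 * (u + 2)\<^sup>2 \<le> 100 * c\<^sup>2"
    using TT by (simp add: power2_eq_square)
qed

text \<open>In the application \<open>lev f\<close> is the \<open>k\<close> with \<open>f \<in> F\<^sub>k\<close>, \<open>deg\<close> is the degree,
  \<open>prod_cong x y z w i\<close> says \<open>x y \<equiv> z w (mod g\<^sub>i)\<close> and \<open>cong y w i\<close> says \<open>y \<equiv> w (mod g\<^sub>i)\<close>.\<close>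
locale sidon_levels =
  fixes F :: "'f set" and n lev deg :: "'f \<Rightarrow> nat"
    and prod_cong :: "'f \<Rightarrow> 'f \<Rightarrow> 'f \<Rightarrow> 'f \<Rightarrow> nat \<Rightarrow> bool"
    and cong :: "'f \<Rightarrow> 'f \<Rightarrow> nat \<Rightarrow> bool"
  assumes level_ge: "x \<in> F \<Longrightarrow> 200 \<le> lev x"
    and degree_less: "x \<in> F \<Longrightarrow> 100 * deg x < 35 * (lev x + 1)\<^sup>2"
    and carry_impossible: "\<lbrakk>x \<in> F; y \<in> F; z \<in> F; w \<in> F; n x + n y = n z + n w;
        2 \<le> i; i \<le> lev x; i \<le> lev y; i \<le> lev z; lev w + 3 \<le> i\<rbrakk> \<Longrightarrow> False"
    and cong_of_gap: "\<lbrakk>x \<in> F; y \<in> F; z \<in> F; w \<in> F; n x + n y = n z + n w;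
        2 \<le> i; i \<le> lev y; i \<le> lev w; lev x + 3 \<le> i; lev z + 3 \<le> i\<rbrakk> \<Longrightarrow> cong y w i"
    and prod_cong_of_eq: "\<lbrakk>x \<in> F; y \<in> F; z \<in> F; w \<in> F; n x + n y = n z + n w;
        1 \<le> i; i \<le> lev x; i \<le> lev y; i \<le> lev z; i \<le> lev w\<rbrakk> \<Longrightarrow> prod_cong x y z w i"
    and level_gap_impossible: "\<lbrakk>x \<in> F; y \<in> F; z \<in> F; w \<in> F; n x + n y = n z + n w;
        lev z + 2 \<le> lev y; lev w + 2 \<le> lev y\<rbrakk> \<Longrightarrow> False"
    and doubleton_eq_of_prod_cong: "\<lbrakk>x \<in> F; y \<in> F; z \<in> F; w \<in> F; \<forall>i\<in>{1..m}. prod_cong x y z w i;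
        deg x + deg y < m\<^sup>2; deg z + deg w < m\<^sup>2\<rbrakk> \<Longrightarrow> {x, y} = {z, w}"
    and eq_of_cong: "\<lbrakk>y \<in> F; w \<in> F; \<forall>i\<in>{lo..hi}. cong y w i; 1 \<le> lo;
        deg y + (lo - 1)\<^sup>2 < hi\<^sup>2; deg w + (lo - 1)\<^sup>2 < hi\<^sup>2\<rbrakk> \<Longrightarrow> y = w"
    and prod_cong_cancel: "\<lbrakk>x \<in> F; y \<in> F; z \<in> F; 1 \<le> i; prod_cong x y z y i\<rbrakk> \<Longrightarrow> cong x z i"
begin

lemma doubleton_eq_of_levels_bounded:
  assumes F: "x \<in> F" "y \<in> F" "z \<in> F" "w \<in> F" and eq: "n x + n y = n z + n w"
    and low: "m \<le> lev x" "m \<le> lev y" "m \<le> lev z" "m \<le> lev w"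
    and up: "lev x < a" "lev z < a" "lev y < b" "lev w < b"
    and ab: "35 * a\<^sup>2 + 35 * b\<^sup>2 \<le> 100 * m\<^sup>2"
  shows "{x, y} = {z, w}"
proof (rule doubleton_eq_of_prod_cong[OF F])
  show "\<forall>i\<in>{1..m}. prod_cong x y z w i"
    using prod_cong_of_eq[OF F eq] low by auto
  have "(lev x + 1)\<^sup>2 \<le> a\<^sup>2" "(lev z + 1)\<^sup>2 \<le> a\<^sup>2" "(lev y + 1)\<^sup>2 \<le> b\<^sup>2" "(lev w + 1)\<^sup>2 \<le> b\<^sup>2"
    using up by (auto intro!: power_mono)
  then show "deg x + deg y < m\<^sup>2" "deg z + deg w < m\<^sup>2"
    using degree_less[OF F(1)] degree_less[OF F(2)] degree_less[OF F(3)] degree_less[OF F(4)] ab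
    by linarith+
qed

lemma spread_levels_impossible:
  assumes F: "x \<in> F" "y \<in> F" "z \<in> F" "w \<in> F" and eq: "n x + n y = n z + n w"
    and ord: "lev x \<le> lev y" "lev z \<le> lev w" "lev w \<le> lev y" "lev y \<le> lev w + 1"
    and spread: "min (lev x) (lev z) + 3 \<le> max (lev x) (lev z)" "min (lev x) (lev z) + 3 < lev y"
  shows False
proof (cases "lev z \<le> lev x")
  case True
  have eq': "n x + n y = n w + n z" using eq by simp
  show False
  proof (cases "lev x \<le> lev w")
    case True
    then show False
      using carry_impossible[OF F(1,2,4,3) eq', of "lev x"] \<open>lev z \<le> lev x\<close> spread ord
        level_ge[OF F(1)] by simp
  next
    case False
    then show False
      using carry_impossible[OF F(1,2,4,3) eq', of "lev w"] \<open>lev z \<le> lev x\<close> spread ord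
        level_ge[OF F(4)] by simp
  qed
next
  case False
  have eq': "n z + n w = n y + n x" using eq by simp
  show False
    using carry_impossible[OF F(3,4,2,1) eq', of "lev z"] False spread ord level_ge[OF F(3)] by simp
qed

lemma doubleton_eq_of_narrow_levels:
  assumes F: "x \<in> F" "y \<in> F" "z \<in> F" "w \<in> F" and eq: "n x + n y = n z + n w"
    and ord: "lev x \<le> lev y" "lev z \<le> lev w" "lev w \<le> lev y" "lev y \<le> lev w + 1"
    and narrow: "max (lev x) (lev z) \<le> min (lev x) (lev z) + 2"
    and large: "100 * (min (lev x) (lev z))\<^sup>2 < 35 * (max (lev x) (lev z) + 1)\<^sup>2 + 35 * (lev y + 1)\<^sup>2"
  shows "{x, y} = {z, w}"
proof -
  define m u where "m = min (lev x) (lev z)" and "u = max (lev x) (lev z)"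
  have m: "200 \<le> m" using level_ge F unfolding m_def by (simp add: min_def)
  have "m \<le> lev y" using ord unfolding m_def by simp
  then have gap: "u + 3 \<le> lev w" "35 * (lev y + 1)\<^sup>2 + 100 * (u + 2)\<^sup>2 \<le> 100 * (lev w)\<^sup>2"
    using square_gap_large[OF m _ _ ord(4,3)] narrow large unfolding m_def[symmetric] u_def[symmetric]
    by simp_all
  have "\<forall>i\<in>{u + 3..lev w}. cong y w i"
    using cong_of_gap[OF F eq] ord(3) unfolding u_def by auto
  moreover have "(lev w + 1)\<^sup>2 \<le> (lev y + 1)\<^sup>2" using ord(3) by (simp only: power_mono add_le_mono1)
  then have "deg y + (u + 2)\<^sup>2 < (lev w)\<^sup>2" "deg w + (u + 2)\<^sup>2 < (lev w)\<^sup>2"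
    using degree_less[OF F(2)] degree_less[OF F(4)] gap(2) by linarith+
  ultimately have "y = w"
    using eq_of_cong[OF F(2,4), of "u + 3" "lev w"] by simp
  have "(lev x + 1)\<^sup>2 \<le> (m + 4)\<^sup>2" "(lev z + 1)\<^sup>2 \<le> (m + 4)\<^sup>2"
    using narrow unfolding m_def by (simp_all add: power_mono)
  then have "deg x < m\<^sup>2" "deg z < m\<^sup>2"
    using degree_less[OF F(1)] degree_less[OF F(3)] square_plus_4_le[OF m] by linarith+
  moreover have "\<forall>i\<in>{1..m}. cong x z i"
    using prod_cong_cancel[OF F(1,2,3)] prod_cong_of_eq[OF F(1,2,3,2)] eq \<open>y = w\<close> ord
    unfolding m_def by auto
  ultimately have "x = z"
    using eq_of_cong[OF F(1,3), of 1 m] by simp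
  with \<open>y = w\<close> show ?thesis by simp
qed

lemma doubleton_eq_wlog:
  assumes F: "x \<in> F" "y \<in> F" "z \<in> F" "w \<in> F" and eq: "n x + n y = n z + n w"
    and ord: "lev x \<le> lev y" "lev z \<le> lev w" "lev w \<le> lev y"
  shows "{x, y} = {z, w}"
proof -
  define m u where "m = min (lev x) (lev z)" and "u = max (lev x) (lev z)"
  have m: "200 \<le> m" using level_ge F unfolding m_def by (simp add: min_def)
  have top: "lev y \<le> lev w + 1"
  proof (rule ccontr)
    assume "\<not> lev y \<le> lev w + 1"
    then show False using level_gap_impossible[OF F eq] ord by simp
  qed
  have low: "m \<le> lev x" "m \<le> lev y" "m \<le> lev z" "m \<le> lev w"
    using ord unfolding m_def by auto
  consider "lev y \<le> m + 3" | "u \<le> m + 2" | "m + 3 \<le> u" "m + 3 < lev y"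
    by linarith
  then show ?thesis
  proof cases
    case 1
    then show ?thesis
      using doubleton_eq_of_levels_bounded[OF F eq low, of "m + 4" "m + 4"] square_plus_4_le[OF m] ord
      unfolding m_def by simp
  next
    case 2
    show ?thesis
    proof (cases "35 * (u + 1)\<^sup>2 + 35 * (lev y + 1)\<^sup>2 \<le> 100 * m\<^sup>2")
      case True
      then show ?thesis
        using doubleton_eq_of_levels_bounded[OF F eq low, of "u + 1" "lev y + 1"] ord
        unfolding u_def by simp
    next
      case False
      then show ?thesis
        using doubleton_eq_of_narrow_levels[OF F eq ord top] 2 unfolding m_def u_def by simp
    qed
  next
    case 3
    then show ?thesis
      using spread_levels_impossible[OF F eq ord top] unfolding m_def u_def by simp
  qed
qed

lemma doubleton_eq_of_max_right:
  assumes F: "x \<in> F" "y \<in> F" "z \<in> F" "w \<in> F" and eq: "n x + n y = n z + n w"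
    and ord: "lev x \<le> lev y" "lev z \<le> lev y" "lev w \<le> lev y"
  shows "{x, y} = {z, w}"
proof (cases "lev z \<le> lev w")
  case True
  then show ?thesis using doubleton_eq_wlog[OF F eq] ord by simp
next
  case False
  have "n x + n y = n w + n z" using eq by simp
  then have "{x, y} = {w, z}"
    using doubleton_eq_wlog[OF F(1,2,4,3)] False ord by simp
  then show ?thesis by blast
qed

theorem doubleton_eq:
  assumes F: "x \<in> F" "y \<in> F" "z \<in> F" "w \<in> F" and eq: "n x + n y = n z + n w"
  shows "{x, y} = {z, w}"
proof -
  have eq_yx: "n y + n x = n z + n w" and eq_wz: "n w + n z = n x + n y" and eq_zw: "n z + n w = n x + n y"
    using eq by simp_all
  consider "lev x \<le> lev y" "lev z \<le> lev y" "lev w \<le> lev y"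
    | "lev y \<le> lev x" "lev z \<le> lev x" "lev w \<le> lev x"
    | "lev x \<le> lev z" "lev y \<le> lev z" "lev w \<le> lev z"
    | "lev x \<le> lev w" "lev y \<le> lev w" "lev z \<le> lev w"
    by linarith
  then show ?thesis
  proof cases
    case 1
    then show ?thesis using doubleton_eq_of_max_right[OF F eq] by simp
  next
    case 2
    then have "{y, x} = {z, w}" using doubleton_eq_of_max_right[OF F(2,1,3,4) eq_yx] by simp
    then show ?thesis by blast
  next
    case 3
    then have "{w, z} = {x, y}" using doubleton_eq_of_max_right[OF F(4,3,1,2) eq_wz] by simp
    then show ?thesis by blast
  next
    case 4
    then have "{z, w} = {x, y}" using doubleton_eq_of_max_right[OF F(3,4,1,2) eq_zw] by simp
    then show ?thesis by blast
  qed
qed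

end

section \<open>The numbers \<open>n\<^sub>f\<close>\<close>

lemma Fam_E:
  assumes "f \<in> Fam R k"
  obtains i where "1 \<le> i" "cc * real k ^ 2 \<le> real (2 * i)" "real (2 * i) < cc * (real k + 1) ^ 2"
    "f \<in> Irr R (2 * i)"
  using assms unfolding Fam_def by blast

lemma Fam_unique:
  assumes "f \<in> Fam R k" "f \<in> Fam R k'"
  shows "k = k'"
proof -
  have below_next: "real (2 * i) < cc * real k'' ^ 2"
    if mem: "f \<in> Fam R k" and irr: "f \<in> Irr R (2 * i)" and less: "k < k''" for k k'' i
  proof -
    obtain j where j: "real (2 * j) < cc * (real k + 1) ^ 2" "f \<in> Irr R (2 * j)"
      using Fam_E[OF mem] by metis
    have "j = i" using j(2) irr by (auto simp: Irr_def)
    moreover have "cc * (real k + 1) ^ 2 \<le> cc * real k'' ^ 2"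
      using less by (intro mult_left_mono power_mono) (auto simp: cc_def)
    ultimately show ?thesis using j(1) by simp
  qed
  obtain i where i: "cc * real k ^ 2 \<le> real (2 * i)" "f \<in> Irr R (2 * i)"
    using Fam_E[OF assms(1)] by metis
  obtain i' where i': "cc * real k' ^ 2 \<le> real (2 * i')" "f \<in> Irr R (2 * i')"
    using Fam_E[OF assms(2)] by metis
  have "i = i'" using i(2) i'(2) by (auto simp: Irr_def)
  show "k = k'"
  proof (rule linorder_cases[of k k'])
    assume "k < k'"
    then show ?thesis using below_next[OF assms(1) i(2), of k'] i' \<open>i = i'\<close> by simp
  next
    assume "k' < k"
    then show ?thesis using below_next[OF assms(2) i'(2), of k] i \<open>i = i'\<close> by simp
  qed
qed

lemma kof_eq: "f \<in> Fam R k \<Longrightarrow> kof R f = k"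
  unfolding kof_def using Fam_unique by blast

lemma Fam_degree:
  assumes "f \<in> Fam R k"
  obtains j where "1 \<le> j" "f \<in> Irr R (2 * j)" "100 * degree f < 35 * (k + 1)\<^sup>2"
proof -
  obtain j where j: "1 \<le> j" "real (2 * j) < cc * (real k + 1) ^ 2" "f \<in> Irr R (2 * j)"
    using Fam_E[OF assms] by metis
  have "real (100 * (2 * j)) < real (35 * (k + 1)\<^sup>2)"
    using j(2) by (simp add: cc_def add.commute)
  then have "100 * degree f < 35 * (k + 1)\<^sup>2"
    using j(3) unfolding Irr_def by (simp only: of_nat_less_iff) simp
  with j show thesis using that by blast
qed

lemma sum_odd_interval:
  "1 \<le> lo \<Longrightarrow> lo \<le> hi + 1 \<Longrightarrow> (\<Sum>i\<in>{lo..hi}. 2 * i - 1) + (lo - 1)\<^sup>2 = (hi::nat)\<^sup>2"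
proof (induction hi)
  case (Suc hi)
  show ?case
  proof (cases "lo \<le> hi + 1")
    case True
    then have "{lo..Suc hi} = insert (Suc hi) {lo..hi}" by auto
    then show ?thesis
      using Suc.IH[OF Suc.prems(1) True] by (simp add: power2_eq_square)
  next
    case False
    then show ?thesis using Suc.prems by simp
  qed
qed simp

locale sidon_construction = field R for R (structure) +
  fixes p :: nat and A :: "nat set" and C0 :: real and g w :: "nat \<Rightarrow> 'a list"
    and r :: "'a list \<Rightarrow> nat \<Rightarrow> nat" and s :: "'a list \<Rightarrow> nat"
  assumes finite_carrier: "finite (carrier R)"
    and card_ge: "C0 \<le> real (card (carrier R))" and C0_ge: "1000 \<le> C0"
    and p_ge: "2 \<le> p" and A_subset: "A \<subseteq> {1 .. p div 2 - 1}"
    and A_sum_free: "\<forall>a\<in>A. \<forall>x\<in>A. \<forall>y\<in>A. a \<noteq> x + y \<and> a \<noteq> x + y + 1"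
    and g_w: "\<forall>i \<ge> 1. g i \<in> Irr R (2 * i - 1) \<and> is_gen R (g i) (w i)"
    and r_s: "\<forall>k f. C0 \<le> real k \<and> f \<in> Fam R k \<longrightarrow>
              (\<forall>i \<in> {1..k}. r f i \<in> A) \<and> s f \<in> {1 .. card (carrier R) ^ (3 * k)}"
begin

abbreviation q :: nat where "q \<equiv> card (carrier R)"
abbreviation n :: "'a list \<Rightarrow> nat" where "n \<equiv> nf R p g w r s"
abbreviation lev :: "'a list \<Rightarrow> nat" where "lev \<equiv> kof R"
abbreviation E :: "'a list \<Rightarrow> nat \<Rightarrow> nat" where "E f i \<equiv> dlog R (g i) (w i) f"
abbreviation D :: "nat \<Rightarrow> nat" where "D \<equiv> place_value (bseq q p)"
abbreviation B :: "nat \<Rightarrow> nat" where "B t \<equiv> bseq q p (2 * t + 1)"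

lemma q_ge: "2 \<le> q"
  using card_ge C0_ge by linarith

lemma A_le: "a \<in> A \<Longrightarrow> a + a + 2 \<le> p"
  using A_subset by fastforce

lemma D_pos: "0 < D j"
  using bseq_pos[OF q_ge] p_ge by (intro place_value_pos) simp

lemma D_mono: "i \<le> j \<Longrightarrow> D i \<le> D j"
  using bseq_pos[OF q_ge] p_ge by (intro place_value_mono) simp_all

lemma D_odd: "D (2 * t + 1) = D (2 * t) * B t"
  and D_even: "D (2 * t + 2) = D (2 * t + 1) * p"
  using place_value_Suc[of "bseq q p" "2 * t"] place_value_Suc[of "bseq q p" "2 * t + 1"]
    bseq_even[of q p t] by simp_all

lemma FF_level: "f \<in> FF R C0 \<Longrightarrow> C0 \<le> real (lev f) \<and> f \<in> Fam R (lev f)"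
  unfolding FF_def using kof_eq by fastforce

lemma level_ge: "f \<in> FF R C0 \<Longrightarrow> 200 \<le> lev f"
  using FF_level C0_ge by fastforce

lemma FF_Irr:
  assumes "f \<in> FF R C0"
  obtains j where "1 \<le> j" "f \<in> Irr R (2 * j)" "100 * degree f < 35 * (lev f + 1)\<^sup>2"
  using Fam_degree FF_level[OF assms] by metis

lemma FF_carrier: "f \<in> FF R C0 \<Longrightarrow> f \<in> carrier (poly_ring R)"
  using FF_Irr IrrD(1) by metis

lemma primitive_root_mod: "1 \<le> i \<Longrightarrow> primitive_root_mod R (g i) (w i)"
  using g_w finite_carrier IrrD(1,2) by unfold_locales auto

lemma g_Irr: "1 \<le> i \<Longrightarrow> g i \<in> Irr R (2 * i - 1)"
  using g_w by simp

lemma not_pdivides_FF: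
  assumes "f \<in> FF R C0" "1 \<le> i"
  shows "\<not> g i pdivides f"
proof -
  obtain j where "f \<in> Irr R (2 * j)" using FF_Irr[OF assms(1)] .
  moreover have "2 * i - 1 \<noteq> 2 * j" using assms(2) by presburger
  ultimately show ?thesis using Irr_not_pdivides_Irr g_Irr[OF assms(2)] by blast
qed

lemma E_less:
  assumes "f \<in> FF R C0" "1 \<le> i"
  shows "E f i < q ^ (2 * i - 1) - 1"
  using primitive_root_mod.dlog_less_units_card[OF primitive_root_mod[OF assms(2)] FF_carrier[OF assms(1)]
      not_pdivides_FF[OF assms]] IrrD(4)[OF g_Irr[OF assms(2)]] by simp

lemma r_s_bounds: "f \<in> FF R C0 \<Longrightarrow> (\<forall>i \<in> {1..lev f}. r f i \<in> A) \<and> s f \<in> {1 .. q ^ (3 * lev f)}"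
  using FF_level r_s by blast

lemma r_mem: "f \<in> FF R C0 \<Longrightarrow> 1 \<le> i \<Longrightarrow> i \<le> lev f \<Longrightarrow> r f i \<in> A"
  using r_s_bounds by simp

lemma coded_number:
  assumes f: "f \<in> FF R C0"
  shows "coded_number q p (lev f) (s f) (E f) (r f)"
proof unfold_locales
  show "2 \<le> q" "2 \<le> p" by (rule q_ge, rule p_ge)
  show "E f i < q ^ (2 * i - 1) - 1" if "1 \<le> i" "i \<le> lev f" for i
    using E_less f that by simp
  show "r f i < p" if "1 \<le> i" "i \<le> lev f" for i
    using A_le r_mem f that by fastforce
  show "1 \<le> s f" "s f \<le> q ^ (3 * lev f)"
    using r_s_bounds[OF f] by simp_all
qed

lemma n_eq: "n f = genbase (bseq q p) (coded_digits (lev f) (s f) (E f) (r f))"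
  unfolding nf_def coded_digits_def Let_def ..

lemma n_mod_odd: "f \<in> FF R C0 \<Longrightarrow> t < lev f \<Longrightarrow>
    n f mod D (2 * t + 1) = n f mod D (2 * t) + E f (Suc t) * D (2 * t)"
  using coded_number.number_mod_odd[OF coded_number] n_eq by simp

lemma n_mod_even: "f \<in> FF R C0 \<Longrightarrow> t < lev f \<Longrightarrow>
    n f mod D (2 * t + 2) = n f mod D (2 * t + 1) + r f (Suc t) * D (2 * t + 1)"
  using coded_number.number_mod_even[OF coded_number] n_eq by simp

lemma D_le_n: "f \<in> FF R C0 \<Longrightarrow> D (2 * lev f) \<le> n f"
  using coded_number.D_ge_number[OF coded_number] n_eq by simp

lemma n_less_D: "f \<in> FF R C0 \<Longrightarrow> n f < D (2 * lev f + 3)"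
  using coded_number.number_less_D[OF coded_number] n_eq by simp

lemma n_less_D_of_level: "f \<in> FF R C0 \<Longrightarrow> lev f + 1 \<le> u \<Longrightarrow> n f < D (2 * u + 1)"
  using n_less_D D_mono[of "2 * lev f + 3" "2 * u + 1"] by fastforce

lemma E_less_B: "f \<in> FF R C0 \<Longrightarrow> E f (Suc t) < B t"
  using E_less[of f "Suc t"] bseq_odd[of q p t] by simp

lemma r_le: "f \<in> FF R C0 \<Longrightarrow> 1 \<le> i \<Longrightarrow> i \<le> lev f \<Longrightarrow> r f i + r f i + 2 \<le> p"
  using A_le r_mem by blast

lemma n_mod_even_less: "f \<in> FF R C0 \<Longrightarrow> Suc u \<le> lev f \<Longrightarrow>
    n f mod D (2 * u + 2) < (r f (Suc u) + 1) * D (2 * u + 1)"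
  using n_mod_even[of f u] mod_less_divisor[OF D_pos, of "n f" "2 * u + 1"] by simp

lemma low_parts_sum_less:
  assumes "f \<in> FF R C0" "f' \<in> FF R C0" "t \<le> lev f" "t \<le> lev f'"
  shows "n f mod D (2 * t) + n f' mod D (2 * t) < D (2 * t)"
proof (cases t)
  case (Suc u)
  have "n f mod D (2 * t) + n f' mod D (2 * t) < (r f t + 1 + (r f' t + 1)) * D (2 * u + 1)"
    using n_mod_even_less[OF assms(1), of u] n_mod_even_less[OF assms(2), of u] assms(3,4) Suc
    by (simp add: add_mult_distrib)
  also have "\<dots> \<le> p * D (2 * u + 1)"
    using r_le[OF assms(1)] r_le[OF assms(2)] assms(3,4) Suc by (intro mult_le_mono1) fastforce
  finally show ?thesis using D_even[of u] Suc by (simp add: mult.commute)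
qed simp

lemma small_plus_low_part_less:
  assumes "f \<in> FF R C0" "Suc u \<le> lev f" "m < D (2 * u + 1)"
  shows "m + n f mod D (2 * u + 2) < D (2 * u + 2)"
proof -
  have "m + n f mod D (2 * u + 2) < (r f (Suc u) + 2) * D (2 * u + 1)"
    using n_mod_even_less[OF assms(1,2)] assms(3) by simp
  also have "\<dots> \<le> p * D (2 * u + 1)"
    using r_le[OF assms(1), of "Suc u"] assms(2) by (intro mult_le_mono1) simp
  finally show ?thesis using D_even[of u] by (simp add: mult.commute)
qed

lemma small_plus_low_part_less_odd:
  assumes "f \<in> FF R C0" "Suc u < lev f" "m < D (2 * u + 1)"
  shows "m + n f mod D (2 * u + 3) < D (2 * u + 3)"
proof -
  have "m + n f mod D (2 * u + 3) = (m + n f mod D (2 * u + 2)) + E f (Suc (Suc u)) * D (2 * u + 2)"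
    using n_mod_odd[OF assms(1), of "Suc u"] assms(2) by (simp add: numeral_3_eq_3)
  also have "\<dots> < D (2 * u + 2) + E f (Suc (Suc u)) * D (2 * u + 2)"
    using small_plus_low_part_less[OF assms(1) _ assms(3)] assms(2) by simp
  also have "\<dots> \<le> B (Suc u) * D (2 * u + 2)"
    using E_less_B[OF assms(1), of "Suc u"] by (simp add: Suc_le_eq mult_le_mono1 flip: mult_Suc)
  finally show ?thesis using D_odd[of "Suc u"] by (simp add: numeral_3_eq_3 mult.commute)
qed

text \<open>The digits \<open>r\<close> of \<open>n x + n y\<close> and of \<open>n z + n v\<close> at position \<open>2 i - 1\<close> would differ by
  at most a carry, which the sum-freeness of \<open>A\<close> forbids.\<close>
lemma carry_impossible:
  assumes F: "x \<in> FF R C0" "y \<in> FF R C0" "z \<in> FF R C0" "v \<in> FF R C0" and eq: "n x + n y = n z + n v"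
    and i: "2 \<le> i" "i \<le> lev x" "i \<le> lev y" "i \<le> lev z" "lev v + 3 \<le> i"
  shows False
proof -
  obtain u where u: "i = Suc (Suc u)" using i(1) by (metis add_2_eq_Suc le_Suc_ex)
  let ?W = "D (2 * u + 3)" and ?r = "\<lambda>f. r f (Suc (Suc u))"
  have Z: "D (2 * Suc u + 2) = ?W * p" using D_even[of "Suc u"] by (simp add: numeral_3_eq_3)
  have split: "n f mod (?W * p) = n f mod ?W + ?r f * ?W" if "f \<in> FF R C0" "i \<le> lev f" for f
    using n_mod_even[OF that(1), of "Suc u"] that(2) u Z by (simp add: numeral_3_eq_3)
  have w_small: "n v < D (2 * u + 1)" using n_less_D_of_level[OF F(4)] i(5) u by simp
  have v_less: "n v < ?W"
    using w_small D_mono[of "2 * u + 1" "2 * u + 3"] by simp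
  moreover have "?W \<le> ?W * p" using p_ge by simp
  ultimately have "n v mod (?W * p) = n v + 0 * ?W" by (simp add: less_le_trans)
  from mod_add_div_digit[OF this split[OF F(3) i(4)] v_less mod_less_divisor[OF D_pos]]
  have "(n v + n z) mod (?W * p) div ?W = (?r z + (n v + n z mod ?W) div ?W) mod p"
    by simp
  also have "\<dots> = ?r z"
    using small_plus_low_part_less_odd[OF F(3) _ w_small] i(4) u r_le[OF F(3), of i] by simp
  finally have right: "(n x + n y) mod (?W * p) div ?W = ?r z" using eq by (simp add: add.commute)
  define c where "c = (n x mod ?W + n y mod ?W) div ?W"
  have "n x mod ?W + n y mod ?W < 2 * ?W"
    using mod_less_divisor[OF D_pos, of "n x" "2 * u + 3"] mod_less_divisor[OF D_pos, of "n y" "2 * u + 3"]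
    by linarith
  then have "c \<le> 1"
    using less_mult_imp_div_less unfolding c_def by fastforce
  moreover have "?r x + ?r y + c < p"
    using r_le[OF F(1), of i] r_le[OF F(2), of i] i u \<open>c \<le> 1\<close> by simp
  ultimately have "?r z = ?r x + ?r y + c"
    using right mod_add_div_digit[OF split[OF F(1) i(2)] split[OF F(2) i(3)]] D_pos
    unfolding c_def by simp
  then show False
    using A_sum_free r_mem[OF F(1)] r_mem[OF F(2)] r_mem[OF F(3)] i u \<open>c \<le> 1\<close> by (cases c) auto
qed

lemma E_eq_of_gap:
  assumes F: "x \<in> FF R C0" "y \<in> FF R C0" "z \<in> FF R C0" "v \<in> FF R C0" and eq: "n x + n y = n z + n v"
    and i: "2 \<le> i" "i \<le> lev y" "i \<le> lev v" "lev x + 3 \<le> i" "lev z + 3 \<le> i"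
  shows "E y i = E v i"
proof -
  obtain u where u: "i = Suc (Suc u)" using i(1) by (metis add_2_eq_Suc le_Suc_ex)
  let ?V = "D (2 * u + 2)"
  have digit: "(n a + n b) mod (?V * B (Suc u)) div ?V = E b i"
    if "a \<in> FF R C0" "b \<in> FF R C0" "i \<le> lev b" "lev a + 3 \<le> i" for a b
  proof -
    have small: "n a < D (2 * u + 1)" using n_less_D_of_level that(1,4) u by simp
    then have "n a < ?V" using D_mono[of "2 * u + 1" "2 * u + 2"] by simp
    moreover have "?V \<le> ?V * B (Suc u)" using E_less_B[OF that(2), of "Suc u"] by simp
    ultimately have a_mod: "n a mod (?V * B (Suc u)) = n a + 0 * ?V" by (simp add: less_le_trans)
    have b_mod: "n b mod (?V * B (Suc u)) = n b mod ?V + E b i * ?V"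
      using n_mod_odd[OF that(2), of "Suc u"] D_odd[of "Suc u"] that(3) u by simp
    have "n a + n b mod ?V < ?V"
      using small_plus_low_part_less[OF that(2) _ small] that(3) u by simp
    from mod_add_div_digit_no_carry[OF a_mod b_mod this]
    show ?thesis using E_less_B[OF that(2), of "Suc u"] u by simp
  qed
  show ?thesis using digit[OF F(1,2) i(2,4)] digit[OF F(3,4) i(3,5)] eq by simp
qed

lemma E_sum_mod_eq:
  assumes F: "x \<in> FF R C0" "y \<in> FF R C0" "z \<in> FF R C0" "v \<in> FF R C0" and eq: "n x + n y = n z + n v"
    and i: "1 \<le> i" "i \<le> lev x" "i \<le> lev y" "i \<le> lev z" "i \<le> lev v"
  shows "(E x i + E y i) mod (q ^ (2 * i - 1) - 1) = (E z i + E v i) mod (q ^ (2 * i - 1) - 1)"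
proof -
  obtain t where t: "i = Suc t" using i(1) by (cases i) auto
  let ?V = "D (2 * t)"
  have split: "n a mod (?V * B t) = n a mod ?V + E a i * ?V" if "a \<in> FF R C0" "i \<le> lev a" for a
    using n_mod_odd[OF that(1), of t] D_odd[of t] that(2) t by simp
  have "(n x + n y) mod (?V * B t) div ?V = (E x i + E y i) mod B t"
    by (rule mod_add_div_digit_no_carry[OF split[OF F(1) i(2)] split[OF F(2) i(3)]
          low_parts_sum_less[OF F(1,2)]]) (use i t in simp_all)
  moreover have "(n z + n v) mod (?V * B t) div ?V = (E z i + E v i) mod B t"
    by (rule mod_add_div_digit_no_carry[OF split[OF F(3) i(4)] split[OF F(4) i(5)]
          low_parts_sum_less[OF F(3,4)]]) (use i t in simp_all)
  ultimately show ?thesis using eq bseq_odd[of q p t] t by simp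
qed

lemma level_gap_impossible:
  assumes F: "x \<in> FF R C0" "y \<in> FF R C0" "z \<in> FF R C0" "v \<in> FF R C0" and eq: "n x + n y = n z + n v"
    and gap: "lev z + 2 \<le> lev y" "lev v + 2 \<le> lev y"
  shows False
proof -
  obtain m where m: "lev y = Suc m" using gap(1) by (cases "lev y") auto
  have "n z + n v < 2 * D (2 * m + 1)"
    using n_less_D_of_level[OF F(3), of m] n_less_D_of_level[OF F(4), of m] gap m by simp
  also have "\<dots> \<le> D (2 * m + 1) * p" using p_ge by simp
  also have "\<dots> \<le> n y" using D_le_n[OF F(2)] D_even[of m] m by simp
  finally show False using eq by simp
qed

lemma pcong_FF_imp_eq:
  assumes "y \<in> FF R C0" "v \<in> FF R C0" "\<forall>i\<in>{lo..hi}. pcong R (g i) y v" "1 \<le> lo"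
    and "degree y + (lo - 1)\<^sup>2 < hi\<^sup>2" "degree v + (lo - 1)\<^sup>2 < hi\<^sup>2"
  shows "y = v"
proof -
  have "lo \<le> hi + 1"
  proof (rule ccontr)
    assume "\<not> lo \<le> hi + 1"
    then have "hi\<^sup>2 \<le> (lo - 1)\<^sup>2" by (simp add: power_mono)
    then show False using assms(5) by linarith
  qed
  then have sum: "(\<Sum>i\<in>{lo..hi}. 2 * i - 1) + (lo - 1)\<^sup>2 = hi\<^sup>2"
    using sum_odd_interval assms(4) by blast
  show ?thesis
  proof (rule pcong_Irr_family_imp_eq[of "{lo..hi}" g "\<lambda>i. 2 * i - 1"])
    show "inj_on (\<lambda>i. 2 * i - 1) {lo..hi}" using assms(4) by (intro inj_onI) simp
  qed (use assms sum g_Irr FF_carrier in auto)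
qed

lemma prod_pcong_FF_imp_doubleton_eq:
  assumes F: "x \<in> FF R C0" "y \<in> FF R C0" "z \<in> FF R C0" "v \<in> FF R C0"
    and "\<forall>i\<in>{1..m}. pcong R (g i) (x \<otimes>\<^bsub>poly_ring R\<^esub> y) (z \<otimes>\<^bsub>poly_ring R\<^esub> v)"
    and "degree x + degree y < m\<^sup>2" "degree z + degree v < m\<^sup>2"
  shows "{x, y} = {z, v}"
proof -
  interpret UP: cring "poly_ring R" by (rule univ_poly_is_cring[OF carrier_is_subring])
  obtain jx jy jz jv where j: "x \<in> Irr R (2 * jx)" "y \<in> Irr R (2 * jy)" "z \<in> Irr R (2 * jz)" "v \<in> Irr R (2 * jv)"
    using FF_Irr F by metis
  have sum: "(\<Sum>i\<in>{1..m}. 2 * i - 1) = m\<^sup>2"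
    using sum_odd_interval[of 1 m] by simp
  have "x \<otimes>\<^bsub>poly_ring R\<^esub> y = z \<otimes>\<^bsub>poly_ring R\<^esub> v"
  proof (rule pcong_Irr_family_imp_eq[of "{1..m}" g "\<lambda>i. 2 * i - 1"])
    show "inj_on (\<lambda>i. 2 * i - 1) {1..m}" by (intro inj_onI) simp
    show "degree (x \<otimes>\<^bsub>poly_ring R\<^esub> y) < (\<Sum>i\<in>{1..m}. 2 * i - 1)"
      using degree_mult[OF FF_carrier[OF F(1)] FF_carrier[OF F(2)] Irr_not_Nil[OF j(1)] Irr_not_Nil[OF j(2)]]
        assms(6) sum by simp
    show "degree (z \<otimes>\<^bsub>poly_ring R\<^esub> v) < (\<Sum>i\<in>{1..m}. 2 * i - 1)"
      using degree_mult[OF FF_carrier[OF F(3)] FF_carrier[OF F(4)] Irr_not_Nil[OF j(3)] Irr_not_Nil[OF j(4)]]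
        assms(7) sum by simp
  qed (use assms(5) g_Irr FF_carrier F in auto)
  then show ?thesis using Irr_mult_eq_imp_doubleton_eq[OF j] by simp
qed

lemma pcong_of_gap:
  assumes F: "x \<in> FF R C0" "y \<in> FF R C0" "z \<in> FF R C0" "v \<in> FF R C0" and eq: "n x + n y = n z + n v"
    and i: "2 \<le> i" "i \<le> lev y" "i \<le> lev v" "lev x + 3 \<le> i" "lev z + 3 \<le> i"
  shows "pcong R (g i) y v"
  using primitive_root_mod.pcong_of_dlog_eq[OF primitive_root_mod FF_carrier[OF F(2)]
      not_pdivides_FF[OF F(2)] FF_carrier[OF F(4)] not_pdivides_FF[OF F(4)]]
    E_eq_of_gap[OF F eq i] i(1) by simp

lemma prod_pcong_of_eq:
  assumes F: "x \<in> FF R C0" "y \<in> FF R C0" "z \<in> FF R C0" "v \<in> FF R C0" and eq: "n x + n y = n z + n v"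
    and i: "1 \<le> i" "i \<le> lev x" "i \<le> lev y" "i \<le> lev z" "i \<le> lev v"
  shows "pcong R (g i) (x \<otimes>\<^bsub>poly_ring R\<^esub> y) (z \<otimes>\<^bsub>poly_ring R\<^esub> v)"
  using primitive_root_mod.pcong_mult_of_dlog_add[OF primitive_root_mod[OF i(1)]
      FF_carrier[OF F(1)] not_pdivides_FF[OF F(1) i(1)] FF_carrier[OF F(2)] not_pdivides_FF[OF F(2) i(1)]
      FF_carrier[OF F(3)] not_pdivides_FF[OF F(3) i(1)] FF_carrier[OF F(4)] not_pdivides_FF[OF F(4) i(1)]]
    E_sum_mod_eq[OF F eq i] IrrD(4)[OF g_Irr[OF i(1)]] by simp

lemma prod_pcong_cancel:
  assumes "x \<in> FF R C0" "y \<in> FF R C0" "z \<in> FF R C0" "1 \<le> i"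
    and "pcong R (g i) (x \<otimes>\<^bsub>poly_ring R\<^esub> y) (z \<otimes>\<^bsub>poly_ring R\<^esub> y)"
  shows "pcong R (g i) x z"
  using pcong_mult_cancel_right[OF IrrD(1,2)[OF g_Irr[OF assms(4)]] FF_carrier[OF assms(1)]
      FF_carrier[OF assms(3)] FF_carrier[OF assms(2)] not_pdivides_FF[OF assms(2,4)] assms(5)] .

end

sublocale sidon_construction \<subseteq> sidon_levels "FF R C0" n lev degree
  "\<lambda>x y z v i. pcong R (g i) (x \<otimes>\<^bsub>poly_ring R\<^esub> y) (z \<otimes>\<^bsub>poly_ring R\<^esub> v)"
  "\<lambda>y v i. pcong R (g i) y v"
proof (unfold_locales, goal_cases)
  case (1 x)
  then show ?case by (rule level_ge)
next
  case (2 x)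
  then show ?case using FF_Irr by metis
next
  case (3 x y z v i)
  then show ?case by (rule carry_impossible)
next
  case (4 x y z v i)
  then show ?case by (rule pcong_of_gap)
next
  case (5 x y z v i)
  then show ?case by (rule prod_pcong_of_eq)
next
  case (6 x y z v)
  then show ?case by (rule level_gap_impossible)
next
  case (7 x y z v m)
  then show ?case by (rule prod_pcong_FF_imp_doubleton_eq)
next
  case (8 y v lo hi)
  then show ?case by (rule pcong_FF_imp_eq)
next
  case (9 x y z i)
  then show ?case by (rule prod_pcong_cancel)
qed

context sidon_construction
begin

theorem sidon_numbers: "sidon (n ` FF R C0)"
proof -
  have "0 < n f" if "f \<in> FF R C0" for f
    using D_le_n[OF that] D_pos[of "2 * lev f"] by simp
  moreover have "n x = n z \<and> n y = n v"
    if "x \<in> FF R C0" "y \<in> FF R C0" "z \<in> FF R C0" "v \<in> FF R C0"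
      and "n x \<le> n y" "n z \<le> n v" "n x + n y = n z + n v" for x y z v
  proof -
    have "{x, y} = {z, v}" using doubleton_eq that by blast
    then have "x = z \<and> y = v \<or> x = v \<and> y = z" by (simp add: doubleton_eq_iff)
    then show ?thesis using that(5-7) by auto
  qed
  ultimately show ?thesis unfolding sidon_def by blast
qed

end

theorem lemma4p1:
  fixes p :: nat and A :: "nat set"
  assumes "Factorial_Ring.prime p"
    and "A \<subseteq> {1 .. p div 2 - 1}"
    and "\<forall>a\<in>A. \<forall>x\<in>A. \<forall>y\<in>A. a \<noteq> x + y \<and> a \<noteq> x + y + 1"
    and "\<exists>m. {m .. m + p + 1} \<subseteq> {x + y + z | x y z. x \<in> A \<and> y \<in> A \<and> z \<in> A}"
  shows "\<exists>C::real. \<forall>C0 \<ge> C. C0 > 100 * real p \<longrightarrow>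
    (\<forall>(R :: ('a, 'b) ring_scheme) g w r s.
       field R \<and> finite (carrier R) \<and> real (card (carrier R)) \<ge> C0
       \<and> (\<forall>i \<ge> 1. g i \<in> Irr R (2 * i - 1) \<and> is_gen R (g i) (w i))
       \<and> (\<forall>k f. real k \<ge> C0 \<and> f \<in> Fam R k \<longrightarrow>
              (\<forall>i \<in> {1..k}. r f i \<in> A) \<and> s f \<in> {1 .. card (carrier R) ^ (3 * k)})
       \<longrightarrow>
       (\<forall>f1 \<in> FF R C0. \<forall>f2 \<in> FF R C0. \<forall>f3 \<in> FF R C0. \<forall>f4 \<in> FF R C0.
          nf R p g w r s f1 + nf R p g w r s f2 = nf R p g w r s f3 + nf R p g w r s f4
          \<longrightarrow> {f1, f2} = {f3, f4})
       \<and> sidon (nf R p g w r s ` FF R C0))"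
proof (intro exI[of _ "1000::real"] allI impI)
  fix C0 :: real and R :: "('a, 'b) ring_scheme" and g w r s
  assume "1000 \<le> C0" "100 * real p < C0"
    and "field R \<and> finite (carrier R) \<and> real (card (carrier R)) \<ge> C0
       \<and> (\<forall>i \<ge> 1. g i \<in> Irr R (2 * i - 1) \<and> is_gen R (g i) (w i))
       \<and> (\<forall>k f. real k \<ge> C0 \<and> f \<in> Fam R k \<longrightarrow>
              (\<forall>i \<in> {1..k}. r f i \<in> A) \<and> s f \<in> {1 .. card (carrier R) ^ (3 * k)})"
  then interpret sidon_construction R p A C0 g w r s
    unfolding sidon_construction_def sidon_construction_axioms_def
    using prime_ge_2_nat[OF assms(1)] assms(2,3) by auto
  show "(\<forall>f1 \<in> FF R C0. \<forall>f2 \<in> FF R C0. \<forall>f3 \<in> FF R C0. \<forall>f4 \<in> FF R C0.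
          nf R p g w r s f1 + nf R p g w r s f2 = nf R p g w r s f3 + nf R p g w r s f4
          \<longrightarrow> {f1, f2} = {f3, f4})
       \<and> sidon (nf R p g w r s ` FF R C0)"
    using doubleton_eq sidon_numbers by blast
qed

end
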